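(* In the setting below, there exist $K>0$ and $\hat\beta>0$ such that for all $\beta<\hat\beta$, $D,h\in\mathbb{R}$ and $N\ge2$, \[|p-p_-|\le\frac KN,\qquad |q-q_-|\le\frac KN.\]
   Context: Fix $S\ge1$ and let $X$ be standard Gaussian. For $b\ge0$ consider the system in $(p,q)$ $p=\mathbb{E}\big[\frac{\sum_{\gamma=1}^{S}\gamma^2\, 2\cosh[\gamma(\sqrt{q}bX+h)]e^{\gamma^2[D+\frac{b^2}{2}(p-q)]}}{1+\sum_{\gamma=1}^{S}2\cosh[\gamma(\sqrt{q}bX+h)]e^{\gamma^2[D+\frac{b^2}{2}(p-q)]}}\big]$, $q=\mathbb{E}\big[\big(\frac{\sum_{\gamma=1}^{S}\gamma\, 2\sinh[\gamma(\sqrt{q}bX+h)]e^{\gamma^2[D+\frac{b^2}{2}(p-q)]}}{1+\sum_{\gamma=1}^{S}2\cosh[\gamma(\sqrt{q}bX+h)]e^{\gamma^2[D+\frac{b^2}{2}(p-q)]}}\big)^2\big]$, which for $b$ below some threshold $\tilde\beta>0$ has a unique solution; $\beta<\tilde\beta$ is assumed. Let $(p,q)$ be the solution with $b=\beta$, let $\beta_-=\beta\sqrt{(N-1)/N}$ (so $\beta_-/\sqrt{N-1}=\beta/\sqrt N$), and let $(p_-,q_-)$ be the solution with $b=\beta_-$. *)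

theory Defs
  imports "HOL-Probability.Probability"
begin

definition gauss_exp :: "(real \<Rightarrow> real) \<Rightarrow> real" where
  "gauss_exp f = (\<integral>x. std_normal_density x * f x \<partial>lborel)"

definition wgt :: "real \<Rightarrow> real \<Rightarrow> real \<Rightarrow> real \<Rightarrow> nat \<Rightarrow> real" where
  "wgt D b p q g = exp ((real g)^2 * (D + b^2 / 2 * (p - q)))"

definition Zden :: "nat \<Rightarrow> real \<Rightarrow> real \<Rightarrow> real \<Rightarrow> real \<Rightarrow> real \<Rightarrow> real \<Rightarrow> real" where
  "Zden S D h b p q x = 1 + (\<Sum>g=1..S. 2 * cosh (real g * (sqrt q * b * x + h)) * wgt D b p q g)"

definition Pnum :: "nat \<Rightarrow> real \<Rightarrow> real \<Rightarrow> real \<Rightarrow> real \<Rightarrow> real \<Rightarrow> real \<Rightarrow> real" where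
  "Pnum S D h b p q x = (\<Sum>g=1..S. (real g)^2 * (2 * cosh (real g * (sqrt q * b * x + h))) * wgt D b p q g)"

definition Qnum :: "nat \<Rightarrow> real \<Rightarrow> real \<Rightarrow> real \<Rightarrow> real \<Rightarrow> real \<Rightarrow> real \<Rightarrow> real" where
  "Qnum S D h b p q x = (\<Sum>g=1..S. real g * (2 * sinh (real g * (sqrt q * b * x + h))) * wgt D b p q g)"

definition is_solution :: "nat \<Rightarrow> real \<Rightarrow> real \<Rightarrow> real \<Rightarrow> real \<Rightarrow> real \<Rightarrow> bool" where
  "is_solution S D h b p q \<longleftrightarrow>
     p = gauss_exp (\<lambda>x. Pnum S D h b p q x / Zden S D h b p q x) \<and>
     q = gauss_exp (\<lambda>x. (Qnum S D h b p q x / Zden S D h b p q x)^2)"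

end

theory Submission
  imports Defs
begin

text \<open>
  Write \<open>Z k t e\<close> for the sum over the spins \<open>\<gamma> \<in> {-S..S}\<close> of \<open>\<gamma>^k * exp (\<gamma> t + \<gamma>\<^sup>2 e)\<close>
  and \<open>m k = Z k / Z 0\<close> for the moments of the corresponding Gibbs measure. The system says
  \<open>p = E m 2 (s X + h) e\<close> and \<open>q = E (m 1 (s X + h) e)\<^sup>2\<close> with \<open>s = sqrt q * b\<close> and
  \<open>e = D + b\<^sup>2/2 * (p - q)\<close>. Since \<open>|m k| \<le> S^k\<close> and the \<open>t\<close>- and \<open>e\<close>-derivatives of \<open>m k\<close> are
  \<open>m (k+1) - m k * m 1\<close> and \<open>m (k+2) - m k * m 2\<close>, both integrands are bounded, Lipschitz
  in \<open>e\<close> and have a Lipschitz \<open>t\<close>-derivative, with a constant depending on \<open>S\<close> only. For such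
  integrands the Gaussian average is Lipschitz in \<open>e\<close> and in \<open>s\<^sup>2\<close> (not merely in \<open>s\<close>): the
  first-order term in \<open>s\<close> vanishes because \<open>E X = 0\<close>. As \<open>\<beta>\<^sub>-\<^sup>2 = \<beta>\<^sup>2 - \<beta>\<^sup>2/N\<close>, comparing the
  two fixed points gives \<open>\<Delta> \<le> C \<beta>\<^sup>2 \<Delta> + C' \<beta>\<^sup>2/N\<close> for \<open>\<Delta> = |p - p\<^sub>-| + |q - q\<^sub>-|\<close>, and for
  small \<open>\<beta>\<close> the first term on the right is absorbed by the left-hand side.
\<close>

lemma borel_measurable_if_has_real_derivative:
  fixes g :: "real \<Rightarrow> real"
  assumes "\<And>x. (g has_real_derivative g' x) (at x)"
  shows "g \<in> borel_measurable borel"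
  using assms
  by (intro borel_measurable_continuous_onI continuous_at_imp_continuous_on) (auto intro: DERIV_isCont)

lemma first_order_remainder_diff_le:
  fixes g g' :: "real \<Rightarrow> real"
  assumes deriv: "\<And>x. (g has_real_derivative g' x) (at x)"
    and lipschitz: "\<And>x y. \<bar>g' x - g' y\<bar> \<le> M * \<bar>x - y\<bar>"
    and same_sign: "0 \<le> y * z"
  shows "\<bar>g (h + y) - g (h + z) - (y - z) * g' h\<bar> \<le> M * \<bar>y\<^sup>2 - z\<^sup>2\<bar>"
proof -
  define R where "R w = g (h + w) - w * g' h" for w
  have "M \<ge> 0" using lipschitz[of 1 0] by simp
  have "norm (R y - R z) \<le> M * \<bar>y + z\<bar> * norm (y - z)"
  proof (rule field_differentiable_bound[OF convex_closed_segment])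
    fix w assume w: "w \<in> closed_segment z y"
    have "((\<lambda>w. g (h + w)) has_real_derivative g' (h + w) * 1) (at w)"
      by (rule DERIV_chain2[OF deriv]) (auto intro!: derivative_eq_intros)
    from DERIV_diff[OF this DERIV_cmult_right[OF DERIV_ident, of "g' h"]]
    show "(R has_field_derivative g' (h + w) - g' h) (at w within closed_segment z y)"
      unfolding R_def by (simp add: has_field_derivative_at_within)
    have "\<bar>w\<bar> \<le> \<bar>y + z\<bar>"
      using w same_sign by (auto simp: closed_segment_eq_real_ivl zero_le_mult_iff split: if_splits)
    have "norm (g' (h + w) - g' h) \<le> M * \<bar>w\<bar>"
      using lipschitz[of "h + w" h] by simp
    also have "\<dots> \<le> M * \<bar>y + z\<bar>"
      using \<open>\<bar>w\<bar> \<le> \<bar>y + z\<bar>\<close> \<open>M \<ge> 0\<close> by (rule mult_left_mono)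
    finally show "norm (g' (h + w) - g' h) \<le> M * \<bar>y + z\<bar>" .
  qed auto
  also have "\<dots> = M * \<bar>y\<^sup>2 - z\<^sup>2\<bar>"
    by (simp add: power2_eq_square abs_mult[symmetric] algebra_simps)
  finally show ?thesis unfolding R_def by (simp add: algebra_simps)
qed

lemma integrable_std_normal_quadratic_growth:
  fixes u :: "real \<Rightarrow> real"
  assumes "u \<in> borel_measurable borel" and growth: "\<And>x. \<bar>u x\<bar> \<le> B + C * x\<^sup>2"
  shows "integrable lborel (\<lambda>x. std_normal_density x * u x)"
proof (rule Bochner_Integration.integrable_bound)
  show "integrable lborel (\<lambda>x. B * (std_normal_density x * x ^ 0) + C * (std_normal_density x * x ^ 2))"
    by (intro Bochner_Integration.integrable_add Bochner_Integration.integrable_mult_right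
        integrable_std_normal_moment)
  show "(\<lambda>x. std_normal_density x * u x) \<in> borel_measurable lborel"
    using assms(1) by measurable
  show "AE x in lborel. norm (std_normal_density x * u x)
          \<le> norm (B * (std_normal_density x * x ^ 0) + C * (std_normal_density x * x ^ 2))"
  proof (intro AE_I2)
    fix x
    have "norm (std_normal_density x * u x) \<le> std_normal_density x * (B + C * x\<^sup>2)"
      by (simp add: abs_mult mult_left_mono growth)
    also have "\<dots> \<le> norm (B * (std_normal_density x * x ^ 0) + C * (std_normal_density x * x ^ 2))"
      by (simp add: algebra_simps)
    finally show "norm (std_normal_density x * u x)
          \<le> norm (B * (std_normal_density x * x ^ 0) + C * (std_normal_density x * x ^ 2))" .
  qed
qed

lemma abs_gauss_exp_le:
  fixes u :: "real \<Rightarrow> real"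
  assumes "u \<in> borel_measurable borel" and growth: "\<And>x. \<bar>u x\<bar> \<le> B + C * x\<^sup>2"
  shows "\<bar>gauss_exp u\<bar> \<le> B + C"
proof -
  have moments: "integrable lborel (\<lambda>x. std_normal_density x * x ^ k)"
      "(\<integral>x. std_normal_density x * x ^ (2 * j) \<partial>lborel) = fact (2 * j) / (2 ^ j * fact j)" for k j
    by (rule integrable_std_normal_moment, rule integral_std_normal_moment_even)
  have "\<bar>gauss_exp u\<bar> \<le> (\<integral>x. B * std_normal_density x + C * (std_normal_density x * x\<^sup>2) \<partial>lborel)"
    unfolding gauss_exp_def
  proof (rule integral_abs_bound_integral[OF integrable_std_normal_quadratic_growth[OF assms]])
    show "integrable lborel (\<lambda>x. B * std_normal_density x + C * (std_normal_density x * x\<^sup>2))"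
      using moments(1)[of 0] moments(1)[of 2] by simp
    fix x
    have "\<bar>std_normal_density x * u x\<bar> \<le> std_normal_density x * (B + C * x\<^sup>2)"
      by (simp add: abs_mult mult_left_mono growth)
    then show "\<bar>std_normal_density x * u x\<bar> \<le> B * std_normal_density x + C * (std_normal_density x * x\<^sup>2)"
      by (simp add: algebra_simps)
  qed
  also have "\<dots> = B + C"
    using moments(1)[of 0] moments(1)[of 2] moments(2)[of 0] moments(2)[of 1] by simp
  finally show ?thesis .
qed

lemma gauss_exp_diff:
  assumes "integrable lborel (\<lambda>x. std_normal_density x * u x)"
    and "integrable lborel (\<lambda>x. std_normal_density x * w x)"
  shows "gauss_exp u - gauss_exp w = gauss_exp (\<lambda>x. u x - w x)"
  unfolding gauss_exp_def using Bochner_Integration.integral_diff[OF assms]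
  by (simp add: algebra_simps)

lemma gauss_exp_rescale_diff_le:
  fixes g g' :: "real \<Rightarrow> real"
  assumes deriv: "\<And>x. (g has_real_derivative g' x) (at x)"
    and lipschitz: "\<And>x y. \<bar>g' x - g' y\<bar> \<le> M * \<bar>x - y\<bar>"
    and bounded: "\<And>x. \<bar>g x\<bar> \<le> B"
    and "0 \<le> s" "0 \<le> s'"
  shows "\<bar>gauss_exp (\<lambda>x. g (s * x + h)) - gauss_exp (\<lambda>x. g (s' * x + h))\<bar> \<le> M * \<bar>s\<^sup>2 - s'\<^sup>2\<bar>"
proof -
  have "g \<in> borel_measurable borel" by (rule borel_measurable_if_has_real_derivative[OF deriv])
  then have meas: "(\<lambda>x. g (a * x + h)) \<in> borel_measurable borel" for a
    by measurable
  have integrable: "integrable lborel (\<lambda>x. std_normal_density x * g (a * x + h))" for a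
    by (rule integrable_std_normal_quadratic_growth[OF meas, where B=B and C=0]) (simp add: bounded)
  define c where "c = (s - s') * g' h"
  define w where "w x = g (s * x + h) - g (s' * x + h) - c * x" for x
  have w_meas: "w \<in> borel_measurable borel" unfolding w_def using meas by measurable
  have w_bound: "\<bar>w x\<bar> \<le> 0 + M * \<bar>s\<^sup>2 - s'\<^sup>2\<bar> * x\<^sup>2" for x
  proof -
    have "\<bar>w x\<bar> \<le> M * \<bar>(s * x)\<^sup>2 - (s' * x)\<^sup>2\<bar>"
      using first_order_remainder_diff_le[OF deriv lipschitz, of "s * x" "s' * x" h] \<open>0 \<le> s\<close> \<open>0 \<le> s'\<close>
      by (simp add: w_def c_def algebra_simps)
    also have "\<dots> = M * \<bar>s\<^sup>2 - s'\<^sup>2\<bar> * x\<^sup>2"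
      by (simp add: power_mult_distrib abs_mult left_diff_distrib[symmetric])
    finally show ?thesis by simp
  qed
  \<comment> \<open>the first-order term drops out because the Gaussian is centred\<close>
  have "(\<lambda>x. std_normal_density x * (g (s * x + h) - g (s' * x + h)))
      = (\<lambda>x. std_normal_density x * w x + c * (std_normal_density x * x ^ 1))"
    by (auto simp: w_def algebra_simps)
  then have "gauss_exp (\<lambda>x. g (s * x + h)) - gauss_exp (\<lambda>x. g (s' * x + h))
      = gauss_exp w + c * (\<integral>x. std_normal_density x * x ^ 1 \<partial>lborel)"
    unfolding gauss_exp_diff[OF integrable integrable]
    using Bochner_Integration.integral_add[OF integrable_std_normal_quadratic_growth[OF w_meas w_bound]
          Bochner_Integration.integrable_mult_right[OF integrable_std_normal_moment[of 1]], of c]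
    by (simp add: gauss_exp_def)
  also have "\<dots> = gauss_exp w"
    using integral_std_normal_moment_odd[of 0] by simp
  finally show ?thesis
    using abs_gauss_exp_le[OF w_meas w_bound] by simp
qed

definition regular_integrand :: "real \<Rightarrow> (real \<Rightarrow> real \<Rightarrow> real) \<Rightarrow> bool" where
  "regular_integrand L F \<longleftrightarrow>
     (\<exists>B. \<forall>t e. \<bar>F t e\<bar> \<le> B) \<and>
     (\<forall>t e e'. \<bar>F t e - F t e'\<bar> \<le> L * \<bar>e - e'\<bar>) \<and>
     (\<exists>F'. (\<forall>t e. ((\<lambda>t. F t e) has_real_derivative F' t e) (at t)) \<and>
           (\<forall>t t' e. \<bar>F' t e - F' t' e\<bar> \<le> L * \<bar>t - t'\<bar>))"

lemma regular_integrandI: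
  fixes F :: "real \<Rightarrow> real \<Rightarrow> real"
  assumes "\<And>t e. \<bar>F t e\<bar> \<le> B"
    and deriv_e: "\<And>t e. ((\<lambda>e. F t e) has_real_derivative F\<^sub>e t e) (at e)"
    and "\<And>t e. \<bar>F\<^sub>e t e\<bar> \<le> L"
    and "\<And>t e. ((\<lambda>t. F t e) has_real_derivative F\<^sub>t t e) (at t)"
    and deriv_tt: "\<And>t e. ((\<lambda>t. F\<^sub>t t e) has_real_derivative F\<^sub>t\<^sub>t t e) (at t)"
    and "\<And>t e. \<bar>F\<^sub>t\<^sub>t t e\<bar> \<le> L"
  shows "regular_integrand L F"
proof -
  have "\<bar>F t e - F t e'\<bar> \<le> L * \<bar>e - e'\<bar>" for t e e'
    using field_differentiable_bound[of UNIV "F t" "F\<^sub>e t" L e e'] deriv_e assms(3)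
    by (simp add: has_field_derivative_at_within)
  moreover have "\<bar>F\<^sub>t t e - F\<^sub>t t' e\<bar> \<le> L * \<bar>t - t'\<bar>" for t t' e
    using field_differentiable_bound[of UNIV "\<lambda>t. F\<^sub>t t e" "\<lambda>t. F\<^sub>t\<^sub>t t e" L t t'] deriv_tt assms(6)
    by (simp add: has_field_derivative_at_within)
  ultimately show ?thesis
    unfolding regular_integrand_def using assms(1,4) by blast
qed

lemma gauss_exp_regular_integrand_diff_le:
  assumes "regular_integrand L F" and "0 \<le> s" "0 \<le> s'"
  shows "\<bar>gauss_exp (\<lambda>x. F (s * x + h) e) - gauss_exp (\<lambda>x. F (s' * x + h) e')\<bar>
           \<le> L * \<bar>e - e'\<bar> + L * \<bar>s\<^sup>2 - s'\<^sup>2\<bar>"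
proof -
  obtain B F' where bounded: "\<And>t e. \<bar>F t e\<bar> \<le> B"
    and lipschitz_e: "\<And>t e e'. \<bar>F t e - F t e'\<bar> \<le> L * \<bar>e - e'\<bar>"
    and deriv: "\<And>t e. ((\<lambda>t. F t e) has_real_derivative F' t e) (at t)"
    and lipschitz_t: "\<And>t t' e. \<bar>F' t e - F' t' e\<bar> \<le> L * \<bar>t - t'\<bar>"
    using assms(1) unfolding regular_integrand_def by blast
  have "(\<lambda>t. F t e) \<in> borel_measurable borel" for e
    by (rule borel_measurable_if_has_real_derivative[OF deriv])
  then have meas: "(\<lambda>x. F (s * x + h) e) \<in> borel_measurable borel" for e
    by measurable
  have integrable: "integrable lborel (\<lambda>x. std_normal_density x * F (s * x + h) e)" for e
    by (rule integrable_std_normal_quadratic_growth[OF meas, where B=B and C=0]) (simp add: bounded)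
  have "\<bar>gauss_exp (\<lambda>x. F (s * x + h) e) - gauss_exp (\<lambda>x. F (s * x + h) e')\<bar> \<le> L * \<bar>e - e'\<bar> + 0"
    unfolding gauss_exp_diff[OF integrable integrable]
    by (rule abs_gauss_exp_le) (use meas lipschitz_e in auto)
  moreover have "\<bar>gauss_exp (\<lambda>x. F (s * x + h) e') - gauss_exp (\<lambda>x. F (s' * x + h) e')\<bar>
      \<le> L * \<bar>s\<^sup>2 - s'\<^sup>2\<bar>"
    by (rule gauss_exp_rescale_diff_le[OF deriv lipschitz_t bounded assms(2,3)])
  ultimately show ?thesis by linarith
qed

text \<open>Since \<open>0 ^ 0 = 1\<close>, the spin \<open>\<gamma> = 0\<close> contributes the summand \<open>1\<close> of \<^const>\<open>Zden\<close>.\<close>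

definition partition_moment :: "nat \<Rightarrow> nat \<Rightarrow> real \<Rightarrow> real \<Rightarrow> real" where
  "partition_moment S k t e =
     (\<Sum>\<gamma> = - int S..int S. of_int \<gamma> ^ k * exp (of_int \<gamma> * t + of_int \<gamma> ^ 2 * e))"

definition gibbs_moment :: "nat \<Rightarrow> nat \<Rightarrow> real \<Rightarrow> real \<Rightarrow> real" where
  "gibbs_moment S k t e = partition_moment S k t e / partition_moment S 0 t e"

lemma sum_symmetric_int_interval:
  fixes f :: "int \<Rightarrow> 'a::comm_monoid_add"
  shows "(\<Sum>\<gamma> = - int S..int S. f \<gamma>) = f 0 + (\<Sum>g = 1..S. f (int g) + f (- int g))"
proof (induction S)
  case 0
  then show ?case by simp
next
  case (Suc S)
  have "{- int (Suc S)..int (Suc S)} = insert (- int (Suc S)) (insert (int (Suc S)) {- int S..int S})"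
    by auto
  then show ?case using Suc by (simp add: ac_simps)
qed

lemma partition_moment_has_derivative_t:
  "((\<lambda>t. partition_moment S k t e) has_real_derivative partition_moment S (Suc k) t e) (at t)"
  unfolding partition_moment_def
  by (rule derivative_eq_intros refl | simp)+ (simp add: sum_distrib_left algebra_simps)

lemma partition_moment_has_derivative_e:
  "((\<lambda>e. partition_moment S k t e) has_real_derivative partition_moment S (Suc (Suc k)) t e) (at e)"
  unfolding partition_moment_def
  by (rule derivative_eq_intros refl | simp)+ (simp add: sum_distrib_left algebra_simps power2_eq_square)

lemma partition_moment_0_ge_1: "1 \<le> partition_moment S 0 t e"
  unfolding partition_moment_def
  using member_le_sum[of 0 "{- int S..int S}" "\<lambda>\<gamma>. exp (of_int \<gamma> * t + of_int \<gamma> ^ 2 * e)"]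
  by simp

lemma abs_partition_moment_le: "\<bar>partition_moment S k t e\<bar> \<le> real S ^ k * partition_moment S 0 t e"
proof -
  have "\<bar>partition_moment S k t e\<bar>
      \<le> (\<Sum>\<gamma> = - int S..int S. \<bar>of_int \<gamma>\<bar> ^ k * exp (of_int \<gamma> * t + of_int \<gamma> ^ 2 * e))"
    unfolding partition_moment_def by (rule order_trans[OF sum_abs]) (simp add: abs_mult power_abs)
  also have "\<dots> \<le> (\<Sum>\<gamma> = - int S..int S. real S ^ k * exp (of_int \<gamma> * t + of_int \<gamma> ^ 2 * e))"
    by (intro sum_mono mult_right_mono power_mono) auto
  finally show ?thesis by (simp add: partition_moment_def sum_distrib_left)
qed

lemma abs_gibbs_moment_le: "\<bar>gibbs_moment S k t e\<bar> \<le> real S ^ k"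
  using abs_partition_moment_le[of S k t e] partition_moment_0_ge_1[of S t e]
  by (simp add: gibbs_moment_def abs_div pos_divide_le_eq)

lemma gibbs_moment_has_derivative_t:
  "((\<lambda>t. gibbs_moment S k t e) has_real_derivative
      gibbs_moment S (Suc k) t e - gibbs_moment S k t e * gibbs_moment S 1 t e) (at t)"
proof -
  have "partition_moment S 0 t e \<noteq> 0" using partition_moment_0_ge_1[of S t e] by simp
  then show ?thesis
    unfolding gibbs_moment_def
    by (auto intro!: derivative_eq_intros partition_moment_has_derivative_t simp: field_simps power2_eq_square)
qed

lemma gibbs_moment_has_derivative_e:
  "((\<lambda>e. gibbs_moment S k t e) has_real_derivative
      gibbs_moment S (Suc (Suc k)) t e - gibbs_moment S k t e * gibbs_moment S 2 t e) (at e)"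
proof -
  have "partition_moment S 0 t e \<noteq> 0" using partition_moment_0_ge_1[of S t e] by simp
  then show ?thesis
    unfolding gibbs_moment_def
    by (auto intro!: derivative_eq_intros partition_moment_has_derivative_e
        simp: field_simps power2_eq_square numeral_2_eq_2)
qed

lemma partition_moment_at_field:
  "partition_moment S k (sqrt q * b * x + h) (D + b\<^sup>2 / 2 * (p - q)) =
     (0::real) ^ k + (\<Sum>g = 1..S. real g ^ k * (exp (real g * (sqrt q * b * x + h))
        + (- 1) ^ k * exp (- (real g * (sqrt q * b * x + h)))) * wgt D b p q g)"
  unfolding partition_moment_def sum_symmetric_int_interval wgt_def exp_add
  by (intro arg_cong2[where f="(+)"] sum.cong) (auto simp: algebra_simps power_minus')

lemma two_cosh_eq: "2 * cosh (y::real) = exp y + exp (- y)"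
  by (simp add: cosh_def)

lemma two_sinh_eq: "2 * sinh (y::real) = exp y - exp (- y)"
  by (simp add: sinh_def)

lemma Zden_eq_partition_moment:
  "Zden S D h b p q x = partition_moment S 0 (sqrt q * b * x + h) (D + b\<^sup>2 / 2 * (p - q))"
  unfolding Zden_def partition_moment_at_field two_cosh_eq by simp

lemma Qnum_eq_partition_moment:
  "Qnum S D h b p q x = partition_moment S 1 (sqrt q * b * x + h) (D + b\<^sup>2 / 2 * (p - q))"
  unfolding Qnum_def partition_moment_at_field two_sinh_eq by simp

lemma Pnum_eq_partition_moment:
  "Pnum S D h b p q x = partition_moment S 2 (sqrt q * b * x + h) (D + b\<^sup>2 / 2 * (p - q))"
  unfolding Pnum_def partition_moment_at_field two_cosh_eq by simp

lemma abs_prod_gibbs_moments_le: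
  "sum_list ks = n \<Longrightarrow> \<bar>\<Prod>k\<leftarrow>ks. gibbs_moment S k t e\<bar> \<le> real S ^ n"
proof (induction ks arbitrary: n)
  case Nil
  then show ?case by simp
next
  case (Cons k ks)
  then show ?case
    using mult_mono[OF abs_gibbs_moment_le[of S k t e] Cons.IH[OF refl]]
    by (auto simp: abs_mult power_add)
qed

lemma regular_integrand_gibbs_moment_2: "regular_integrand (20 * real S ^ 4) (gibbs_moment S 2)"
proof (rule regular_integrandI[where
      F\<^sub>e = "\<lambda>t e. gibbs_moment S 4 t e - gibbs_moment S 2 t e * gibbs_moment S 2 t e" and
      F\<^sub>t = "\<lambda>t e. gibbs_moment S 3 t e - gibbs_moment S 2 t e * gibbs_moment S 1 t e" and
      F\<^sub>t\<^sub>t = "\<lambda>t e. gibbs_moment S 4 t e - 2 * (gibbs_moment S 3 t e * gibbs_moment S 1 t e)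
        + 2 * (gibbs_moment S 2 t e * gibbs_moment S 1 t e * gibbs_moment S 1 t e)
        - gibbs_moment S 2 t e * gibbs_moment S 2 t e"])
  fix t e
  note prod_le = abs_prod_gibbs_moments_le[where S=S and t=t and e=e]
  have m4: "\<bar>gibbs_moment S 4 t e\<bar> \<le> real S ^ 4" by (rule abs_gibbs_moment_le)
  have m22: "\<bar>gibbs_moment S 2 t e * gibbs_moment S 2 t e\<bar> \<le> real S ^ 4"
    using prod_le[of "[2, 2]" 4] by simp
  have m31: "\<bar>gibbs_moment S 3 t e * gibbs_moment S 1 t e\<bar> \<le> real S ^ 4"
    using prod_le[of "[3, 1]" 4] by simp
  have m211: "\<bar>gibbs_moment S 2 t e * gibbs_moment S 1 t e * gibbs_moment S 1 t e\<bar> \<le> real S ^ 4"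
    using prod_le[of "[2, 1, 1]" 4] by (simp add: mult.assoc)
  show "\<bar>gibbs_moment S 2 t e\<bar> \<le> real S ^ 2" by (rule abs_gibbs_moment_le)
  show "((\<lambda>e. gibbs_moment S 2 t e) has_real_derivative
      gibbs_moment S 4 t e - gibbs_moment S 2 t e * gibbs_moment S 2 t e) (at e)"
    using gibbs_moment_has_derivative_e[of S 2 t e] by (simp add: eval_nat_numeral)
  show "\<bar>gibbs_moment S 4 t e - gibbs_moment S 2 t e * gibbs_moment S 2 t e\<bar> \<le> 20 * real S ^ 4"
    using m4 m22 by arith
  show "((\<lambda>t. gibbs_moment S 2 t e) has_real_derivative
      gibbs_moment S 3 t e - gibbs_moment S 2 t e * gibbs_moment S 1 t e) (at t)"
    using gibbs_moment_has_derivative_t[of S 2 e t] by (simp add: eval_nat_numeral)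
  show "((\<lambda>t. gibbs_moment S 3 t e - gibbs_moment S 2 t e * gibbs_moment S 1 t e) has_real_derivative
      gibbs_moment S 4 t e - 2 * (gibbs_moment S 3 t e * gibbs_moment S 1 t e)
        + 2 * (gibbs_moment S 2 t e * gibbs_moment S 1 t e * gibbs_moment S 1 t e)
        - gibbs_moment S 2 t e * gibbs_moment S 2 t e) (at t)"
    by (rule DERIV_cong[OF DERIV_diff[OF gibbs_moment_has_derivative_t
          DERIV_mult[OF gibbs_moment_has_derivative_t gibbs_moment_has_derivative_t]]])
      (simp add: algebra_simps eval_nat_numeral)
  show "\<bar>gibbs_moment S 4 t e - 2 * (gibbs_moment S 3 t e * gibbs_moment S 1 t e)
        + 2 * (gibbs_moment S 2 t e * gibbs_moment S 1 t e * gibbs_moment S 1 t e)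
        - gibbs_moment S 2 t e * gibbs_moment S 2 t e\<bar> \<le> 20 * real S ^ 4"
    using m4 m22 m31 m211 by arith
qed

lemma regular_integrand_gibbs_moment_1_squared:
  "regular_integrand (20 * real S ^ 4) (\<lambda>t e. (gibbs_moment S 1 t e)\<^sup>2)"
proof (rule regular_integrandI[where
      F\<^sub>e = "\<lambda>t e. 2 * (gibbs_moment S 1 t e * gibbs_moment S 3 t e)
        - 2 * (gibbs_moment S 1 t e * gibbs_moment S 1 t e * gibbs_moment S 2 t e)" and
      F\<^sub>t = "\<lambda>t e. 2 * (gibbs_moment S 1 t e * gibbs_moment S 2 t e)
        - 2 * (gibbs_moment S 1 t e * gibbs_moment S 1 t e * gibbs_moment S 1 t e)" and
      F\<^sub>t\<^sub>t = "\<lambda>t e. 2 * (gibbs_moment S 2 t e * gibbs_moment S 2 t e)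
        + 2 * (gibbs_moment S 1 t e * gibbs_moment S 3 t e)
        - 10 * (gibbs_moment S 1 t e * gibbs_moment S 1 t e * gibbs_moment S 2 t e)
        + 6 * (gibbs_moment S 1 t e * gibbs_moment S 1 t e * gibbs_moment S 1 t e * gibbs_moment S 1 t e)"])
  fix t e
  note prod_le = abs_prod_gibbs_moments_le[where S=S and t=t and e=e]
  have m22: "\<bar>gibbs_moment S 2 t e * gibbs_moment S 2 t e\<bar> \<le> real S ^ 4"
    using prod_le[of "[2, 2]" 4] by simp
  have m13: "\<bar>gibbs_moment S 1 t e * gibbs_moment S 3 t e\<bar> \<le> real S ^ 4"
    using prod_le[of "[1, 3]" 4] by simp
  have m112: "\<bar>gibbs_moment S 1 t e * gibbs_moment S 1 t e * gibbs_moment S 2 t e\<bar> \<le> real S ^ 4"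
    using prod_le[of "[1, 1, 2]" 4] by (simp add: mult.assoc)
  have m1111: "\<bar>gibbs_moment S 1 t e * gibbs_moment S 1 t e * gibbs_moment S 1 t e * gibbs_moment S 1 t e\<bar>
      \<le> real S ^ 4"
    using prod_le[of "[1, 1, 1, 1]" 4] by (simp add: mult.assoc)
  show "\<bar>(gibbs_moment S 1 t e)\<^sup>2\<bar> \<le> real S ^ 2"
    using prod_le[of "[1, 1]" 2] by (simp add: power2_eq_square)
  show "((\<lambda>e. (gibbs_moment S 1 t e)\<^sup>2) has_real_derivative
      2 * (gibbs_moment S 1 t e * gibbs_moment S 3 t e)
        - 2 * (gibbs_moment S 1 t e * gibbs_moment S 1 t e * gibbs_moment S 2 t e)) (at e)"
    unfolding power2_eq_square
    by (rule DERIV_cong[OF DERIV_mult[OF gibbs_moment_has_derivative_e gibbs_moment_has_derivative_e]])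
      (simp add: algebra_simps eval_nat_numeral)
  show "\<bar>2 * (gibbs_moment S 1 t e * gibbs_moment S 3 t e)
        - 2 * (gibbs_moment S 1 t e * gibbs_moment S 1 t e * gibbs_moment S 2 t e)\<bar> \<le> 20 * real S ^ 4"
    using m13 m112 by arith
  show "((\<lambda>t. (gibbs_moment S 1 t e)\<^sup>2) has_real_derivative
      2 * (gibbs_moment S 1 t e * gibbs_moment S 2 t e)
        - 2 * (gibbs_moment S 1 t e * gibbs_moment S 1 t e * gibbs_moment S 1 t e)) (at t)"
    unfolding power2_eq_square
    by (rule DERIV_cong[OF DERIV_mult[OF gibbs_moment_has_derivative_t gibbs_moment_has_derivative_t]])
      (simp add: algebra_simps eval_nat_numeral)
  show "((\<lambda>t. 2 * (gibbs_moment S 1 t e * gibbs_moment S 2 t e)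
        - 2 * (gibbs_moment S 1 t e * gibbs_moment S 1 t e * gibbs_moment S 1 t e)) has_real_derivative
      2 * (gibbs_moment S 2 t e * gibbs_moment S 2 t e)
        + 2 * (gibbs_moment S 1 t e * gibbs_moment S 3 t e)
        - 10 * (gibbs_moment S 1 t e * gibbs_moment S 1 t e * gibbs_moment S 2 t e)
        + 6 * (gibbs_moment S 1 t e * gibbs_moment S 1 t e * gibbs_moment S 1 t e * gibbs_moment S 1 t e))
      (at t)"
    by (rule DERIV_cong[OF DERIV_diff[OF
          DERIV_cmult[OF DERIV_mult[OF gibbs_moment_has_derivative_t gibbs_moment_has_derivative_t]]
          DERIV_cmult[OF DERIV_mult[OF DERIV_mult[OF gibbs_moment_has_derivative_t
              gibbs_moment_has_derivative_t] gibbs_moment_has_derivative_t]]]])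
      (simp add: algebra_simps eval_nat_numeral)
  show "\<bar>2 * (gibbs_moment S 2 t e * gibbs_moment S 2 t e)
        + 2 * (gibbs_moment S 1 t e * gibbs_moment S 3 t e)
        - 10 * (gibbs_moment S 1 t e * gibbs_moment S 1 t e * gibbs_moment S 2 t e)
        + 6 * (gibbs_moment S 1 t e * gibbs_moment S 1 t e * gibbs_moment S 1 t e * gibbs_moment S 1 t e)\<bar>
      \<le> 20 * real S ^ 4"
    using m22 m13 m112 m1111 by arith
qed

lemma is_solution_iff_gibbs_moments:
  "is_solution S D h b p q \<longleftrightarrow>
     p = gauss_exp (\<lambda>x. gibbs_moment S 2 (sqrt q * b * x + h) (D + b\<^sup>2 / 2 * (p - q))) \<and>
     q = gauss_exp (\<lambda>x. (gibbs_moment S 1 (sqrt q * b * x + h) (D + b\<^sup>2 / 2 * (p - q)))\<^sup>2)"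
  unfolding is_solution_def gibbs_moment_def
    Zden_eq_partition_moment Pnum_eq_partition_moment Qnum_eq_partition_moment ..

lemma solution_bounds:
  assumes "is_solution S D h b p q"
  shows "0 \<le> q" "\<bar>p\<bar> \<le> real S ^ 2" "\<bar>q\<bar> \<le> real S ^ 2"
proof -
  define s e where "s = sqrt q * b" and "e = D + b\<^sup>2 / 2 * (p - q)"
  have fixed_point: "p = gauss_exp (\<lambda>x. gibbs_moment S 2 (s * x + h) e)"
      "q = gauss_exp (\<lambda>x. (gibbs_moment S 1 (s * x + h) e)\<^sup>2)"
    using assms unfolding is_solution_iff_gibbs_moments s_def e_def by blast+
  have "(\<lambda>t. gibbs_moment S k t e) \<in> borel_measurable borel" for k
    by (rule borel_measurable_if_has_real_derivative[OF gibbs_moment_has_derivative_t])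
  then have meas: "(\<lambda>x. gibbs_moment S k (s * x + h) e) \<in> borel_measurable borel" for k
    by measurable
  show "0 \<le> q"
    unfolding fixed_point(2) gauss_exp_def by (intro integral_nonneg_AE AE_I2) simp
  show "\<bar>p\<bar> \<le> real S ^ 2"
    using abs_gauss_exp_le[OF meas, of 2 "real S ^ 2" 0] abs_gibbs_moment_le[of S 2]
    by (simp add: fixed_point(1))
  have "\<bar>(gibbs_moment S 1 t e)\<^sup>2\<bar> \<le> real S ^ 2" for t
    using power_mono[OF abs_gibbs_moment_le[of S 1 t e], of 2] by (simp add: power_abs)
  then show "\<bar>q\<bar> \<le> real S ^ 2"
    using abs_gauss_exp_le[OF borel_measurable_power[OF meas[of 1]], of 2 "real S ^ 2" 0]
    by (simp add: fixed_point(2))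
qed

lemma solution_perturbation_le:
  assumes sol: "is_solution S D h b p q" and sol': "is_solution S D h b' p' q'"
    and "0 \<le> b" "0 \<le> b'"
  shows "\<bar>p - p'\<bar> + \<bar>q - q'\<bar>
    \<le> 20 * real S ^ 4 * (\<bar>b\<^sup>2 * (p - q) - b'\<^sup>2 * (p' - q')\<bar> + 2 * \<bar>b\<^sup>2 * q - b'\<^sup>2 * q'\<bar>)"
proof -
  define C where "C = 20 * real S ^ 4"
  define s s' where "s = sqrt q * b" and "s' = sqrt q' * b'"
  define e e' where "e = D + b\<^sup>2 / 2 * (p - q)" and "e' = D + b'\<^sup>2 / 2 * (p' - q')"
  have "0 \<le> q" "0 \<le> q'" using solution_bounds(1) sol sol' by blast+
  then have "0 \<le> s" "0 \<le> s'" and s_squared: "s\<^sup>2 = b\<^sup>2 * q" "s'\<^sup>2 = b'\<^sup>2 * q'"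
    using \<open>0 \<le> b\<close> \<open>0 \<le> b'\<close> by (auto simp: s_def s'_def power_mult_distrib)
  have fixed_points:
      "p = gauss_exp (\<lambda>x. gibbs_moment S 2 (s * x + h) e)"
      "q = gauss_exp (\<lambda>x. (gibbs_moment S 1 (s * x + h) e)\<^sup>2)"
      "p' = gauss_exp (\<lambda>x. gibbs_moment S 2 (s' * x + h) e')"
      "q' = gauss_exp (\<lambda>x. (gibbs_moment S 1 (s' * x + h) e')\<^sup>2)"
    using sol sol' unfolding is_solution_iff_gibbs_moments s_def s'_def e_def e'_def by blast+
  have "\<bar>p - p'\<bar> \<le> C * \<bar>e - e'\<bar> + C * \<bar>s\<^sup>2 - s'\<^sup>2\<bar>"
    unfolding C_def
    using gauss_exp_regular_integrand_diff_le[OF regular_integrand_gibbs_moment_2 \<open>0 \<le> s\<close> \<open>0 \<le> s'\<close>]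
    by (simp add: fixed_points)
  moreover have "\<bar>q - q'\<bar> \<le> C * \<bar>e - e'\<bar> + C * \<bar>s\<^sup>2 - s'\<^sup>2\<bar>"
    unfolding C_def
    using gauss_exp_regular_integrand_diff_le[OF regular_integrand_gibbs_moment_1_squared
        \<open>0 \<le> s\<close> \<open>0 \<le> s'\<close>]
    by (simp add: fixed_points)
  moreover have "e - e' = (b\<^sup>2 * (p - q) - b'\<^sup>2 * (p' - q')) / 2"
    unfolding e_def e'_def by (simp add: diff_divide_distrib)
  ultimately show ?thesis
    unfolding C_def s_squared by (simp add: algebra_simps)
qed

lemma solution_sensitivity_le:
  assumes sol: "is_solution S D h b p q" and sol': "is_solution S D h b' p' q'"
    and "0 \<le> b" "0 \<le> b'" and b'_squared: "b'\<^sup>2 = b\<^sup>2 - \<delta>" and "0 \<le> \<delta>"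
    and small: "120 * real S ^ 4 * b\<^sup>2 \<le> 1"
  shows "\<bar>p - p'\<bar> + \<bar>q - q'\<bar> \<le> 160 * real S ^ 6 * \<delta>"
proof -
  define C \<Delta> where "C = 20 * real S ^ 4" and "\<Delta> = \<bar>p - p'\<bar> + \<bar>q - q'\<bar>"
  have "\<bar>p'\<bar> \<le> real S ^ 2" "\<bar>q'\<bar> \<le> real S ^ 2"
    using solution_bounds(2,3)[OF sol'] by auto
  have "b\<^sup>2 * (p - q) - b'\<^sup>2 * (p' - q') = b\<^sup>2 * ((p - p') - (q - q')) + \<delta> * (p' - q')"
    unfolding b'_squared by (simp add: algebra_simps)
  also have "\<bar>\<dots>\<bar> \<le> b\<^sup>2 * \<Delta> + \<delta> * (2 * real S ^ 2)"
  proof (rule order_trans[OF abs_triangle_ineq add_mono])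
    show "\<bar>b\<^sup>2 * ((p - p') - (q - q'))\<bar> \<le> b\<^sup>2 * \<Delta>"
      unfolding \<Delta>_def by (simp add: abs_mult mult_left_mono abs_triangle_ineq4)
    have "\<bar>p' - q'\<bar> \<le> 2 * real S ^ 2"
      using abs_triangle_ineq4[of p' q'] \<open>\<bar>p'\<bar> \<le> _\<close> \<open>\<bar>q'\<bar> \<le> _\<close> by linarith
    then show "\<bar>\<delta> * (p' - q')\<bar> \<le> \<delta> * (2 * real S ^ 2)"
      using \<open>0 \<le> \<delta>\<close> by (simp add: abs_mult mult_left_mono)
  qed
  finally have field_diff: "\<bar>b\<^sup>2 * (p - q) - b'\<^sup>2 * (p' - q')\<bar> \<le> b\<^sup>2 * \<Delta> + \<delta> * (2 * real S ^ 2)" .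
  have "b\<^sup>2 * q - b'\<^sup>2 * q' = b\<^sup>2 * (q - q') + \<delta> * q'"
    unfolding b'_squared by (simp add: algebra_simps)
  also have "\<bar>\<dots>\<bar> \<le> b\<^sup>2 * \<Delta> + \<delta> * real S ^ 2"
    unfolding \<Delta>_def using \<open>\<bar>q'\<bar> \<le> _\<close> \<open>0 \<le> \<delta>\<close>
    by (intro order_trans[OF abs_triangle_ineq] add_mono) (auto simp: abs_mult intro!: mult_left_mono)
  finally have variance_diff: "\<bar>b\<^sup>2 * q - b'\<^sup>2 * q'\<bar> \<le> b\<^sup>2 * \<Delta> + \<delta> * real S ^ 2" .
  have "\<Delta> \<le> C * (\<bar>b\<^sup>2 * (p - q) - b'\<^sup>2 * (p' - q')\<bar> + 2 * \<bar>b\<^sup>2 * q - b'\<^sup>2 * q'\<bar>)"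
    unfolding \<Delta>_def C_def by (rule solution_perturbation_le[OF sol sol' \<open>0 \<le> b\<close> \<open>0 \<le> b'\<close>])
  also have "\<dots> \<le> C * (3 * (b\<^sup>2 * \<Delta>) + 4 * (\<delta> * real S ^ 2))"
    using field_diff variance_diff by (intro mult_left_mono) (auto simp: C_def)
  also have "\<dots> = 3 * (C * b\<^sup>2) * \<Delta> + 4 * C * real S ^ 2 * \<delta>"
    by (simp add: algebra_simps)
  also have "\<dots> \<le> \<Delta> / 2 + 4 * C * real S ^ 2 * \<delta>"
    using small mult_right_mono[of "6 * (C * b\<^sup>2)" 1 \<Delta>] by (simp add: C_def \<Delta>_def)
  finally show ?thesis
    unfolding \<Delta>_def[symmetric] C_def by (simp add: algebra_simps)
qed

lemma solution_diff_le_inverse_N: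
  assumes sol: "is_solution S D h \<beta> p q"
    and sol': "is_solution S D h (\<beta> * sqrt ((real N - 1) / real N)) p' q'"
    and "0 \<le> \<beta>" "N \<ge> 2" and small: "120 * real S ^ 4 * \<beta>\<^sup>2 \<le> 1"
  shows "\<bar>p - p'\<bar> + \<bar>q - q'\<bar> \<le> 2 * real S ^ 2 / real N"
proof -
  have "(\<beta> * sqrt ((real N - 1) / real N))\<^sup>2 = \<beta>\<^sup>2 - \<beta>\<^sup>2 / real N"
    using \<open>N \<ge> 2\<close> by (simp add: power_mult_distrib field_simps)
  then have "\<bar>p - p'\<bar> + \<bar>q - q'\<bar> \<le> 160 * real S ^ 6 * (\<beta>\<^sup>2 / real N)"
    using \<open>0 \<le> \<beta>\<close> \<open>N \<ge> 2\<close> by (intro solution_sensitivity_le[OF sol sol' _ _ _ _ small]) auto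
  also have "\<dots> \<le> 2 * real S ^ 2 / real N"
  proof -
    have "160 * real S ^ 6 * \<beta>\<^sup>2 = 4 / 3 * real S ^ 2 * (120 * real S ^ 4 * \<beta>\<^sup>2)"
      by (simp add: algebra_simps)
    also have "\<dots> \<le> 4 / 3 * real S ^ 2 * 1"
      by (rule mult_left_mono[OF small]) simp
    also have "\<dots> \<le> 2 * real S ^ 2"
      by simp
    finally show ?thesis
      by (simp add: divide_right_mono)
  qed
  finally show ?thesis .
qed

theorem lemma6:
  fixes S :: nat
  assumes "S \<ge> 1"
  shows "\<exists>K>0. \<exists>\<beta>h>0. \<forall>\<beta> D h (N::nat) p q pm qm.
     0 \<le> \<beta> \<longrightarrow> \<beta> < \<beta>h \<longrightarrow> N \<ge> 2 \<longrightarrow>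
     is_solution S D h \<beta> p q \<longrightarrow>
     (\<forall>p' q'. is_solution S D h \<beta> p' q' \<longrightarrow> p' = p \<and> q' = q) \<longrightarrow>
     is_solution S D h (\<beta> * sqrt ((real N - 1) / real N)) pm qm \<longrightarrow>
     (\<forall>p' q'. is_solution S D h (\<beta> * sqrt ((real N - 1) / real N)) p' q' \<longrightarrow> p' = pm \<and> q' = qm) \<longrightarrow>
     \<bar>p - pm\<bar> \<le> K / real N \<and> \<bar>q - qm\<bar> \<le> K / real N"
proof -
  define \<beta>h where "\<beta>h = sqrt (1 / (120 * real S ^ 4))"
  have small: "120 * real S ^ 4 * \<beta>\<^sup>2 \<le> 1" if "0 \<le> \<beta>" "\<beta> < \<beta>h" for \<beta>
  proof -
    have "\<beta>\<^sup>2 < 1 / (120 * real S ^ 4)"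
      using power_strict_mono[OF that(2,1), of 2] by (simp add: \<beta>h_def)
    then show ?thesis using assms by (simp add: field_simps)
  qed
  show ?thesis
  proof (rule exI[of _ "2 * real S ^ 2"], intro conjI exI[of _ \<beta>h] allI impI)
    show "2 * real S ^ 2 > 0" "\<beta>h > 0" using assms by (auto simp: \<beta>h_def)
    fix \<beta> D h N p q pm qm
    assume "0 \<le> \<beta>" "\<beta> < \<beta>h" "2 \<le> N"
      and sol: "is_solution S D h \<beta> p q"
      and "\<forall>p' q'. is_solution S D h \<beta> p' q' \<longrightarrow> p' = p \<and> q' = q"
      and sol': "is_solution S D h (\<beta> * sqrt ((real N - 1) / real N)) pm qm"
      and "\<forall>p' q'. is_solution S D h (\<beta> * sqrt ((real N - 1) / real N)) p' q' \<longrightarrow> p' = pm \<and> q' = qm"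
    have "\<bar>p - pm\<bar> + \<bar>q - qm\<bar> \<le> 2 * real S ^ 2 / real N"
      using solution_diff_le_inverse_N[OF sol sol' \<open>0 \<le> \<beta>\<close> \<open>2 \<le> N\<close> small[OF \<open>0 \<le> \<beta>\<close> \<open>\<beta> < \<beta>h\<close>]] .
    then show "\<bar>p - pm\<bar> \<le> 2 * real S ^ 2 / real N" "\<bar>q - qm\<bar> \<le> 2 * real S ^ 2 / real N"
      by (smt (verit) abs_ge_zero)+
  qed
qed

end
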